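(* Consider the setting described in the context and assume $D>2$. For $t\ge 1$ let $\mathcal{I}_0(t)=\bigcup_{m=0}^{t-1}\mathcal{F}_0(m)$ and $\mathcal{I}_1(t)=\Big(\bigcup_{m=0}^{t-1}\mathcal{F}_{D-1}(m)\Big)\setminus \mathcal{I}_0(t)$. Then for every $t\ge1$, $a_i(t)=1$ for all $i\in\mathcal{I}_1(t)$.
   Context: $G=(V,E)$ is a finite connected undirected graph with node set $V=\{0,\dots,N-1\}$; $\mathcal{N}(i)$ denotes the set of neighbours of $i$. Every edge has length $1$, $d_{ij}$ is the hop distance between $i$ and $j$, and $\mathcal{F}_k(m)=\{i\in V : d_{ik}=m\}$. Every node carries value $v_i=1$. The source set is $S(t)=\{D-1\}$ for $t\le 0$ and $S(t)=\{0\}$ for $t\ge 1$. The integer $D$ satisfies $\max_{i\in V}d_{i0}=D-1$, and nodes are labelled so that $0,1,\dots,D-1$ is a path in which node $i$ is a neighbour of $i+1$ with $d_{0,i}=i$ for $0\le i\le D-1$. The algorithm updates, for $t\ge1$: $\hat d_i(t)=0$ if $i\in S(t)$, and $\hat d_i(t)=\min_{j\in\mathcal{N}(i)}\{\hat d_j(t-1)+1\}$ otherwise; $c_i(t)=i$ if $i\in S(t)$, and otherwise $c_i(t)$ is a minimizer $j\in\mathcal{N}(i)$ of $\hat d_j(t-1)+1$; $C_i(t)=\{j : c_j(t-1)=i \text{ and } \hat d_j(t-1)=\hat d_i(t)+1\}$; $a_i(t)=\sum_{j\in C_i(t)}a_j(t-1)+v_i$. Initial values $(\hat d_i(0),c_i(0),a_i(0))$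 are steady-state values of these recursions when the source set is constantly $\{D-1\}$; in particular $\hat d_i(0)=m$ for all $i\in\mathcal{F}_{D-1}(m)$, and for every integer $m$, $\sum_{i\in\mathcal{F}_{D-1}(m)}a_i(0)\le N$. *)

theory Defs
  imports Main
begin

definition is_walk :: "(nat \<Rightarrow> nat \<Rightarrow> bool) \<Rightarrow> (nat \<Rightarrow> nat) \<Rightarrow> nat \<Rightarrow> nat \<Rightarrow> nat \<Rightarrow> bool" where
  "is_walk adj p n i j \<longleftrightarrow> p 0 = i \<and> p n = j \<and> (\<forall>k<n. adj (p k) (p (Suc k)))"

definition simple_graph :: "nat \<Rightarrow> (nat \<Rightarrow> nat \<Rightarrow> bool) \<Rightarrow> bool" where
  "simple_graph N adj \<longleftrightarrow>
     (\<forall>i j. adj i j \<longrightarrow> i < N \<and> j < N) \<and>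
     (\<forall>i j. adj i j \<longrightarrow> adj j i) \<and> (\<forall>i. \<not> adj i i)"

definition connected_graph :: "nat \<Rightarrow> (nat \<Rightarrow> nat \<Rightarrow> bool) \<Rightarrow> bool" where
  "connected_graph N adj \<longleftrightarrow> (\<forall>i<N. \<forall>j<N. \<exists>p n. is_walk adj p n i j)"

definition hop_dist :: "(nat \<Rightarrow> nat \<Rightarrow> bool) \<Rightarrow> nat \<Rightarrow> nat \<Rightarrow> nat" where
  "hop_dist adj i j = (LEAST n. \<exists>p. is_walk adj p n i j)"

definition level :: "nat \<Rightarrow> (nat \<Rightarrow> nat \<Rightarrow> bool) \<Rightarrow> nat \<Rightarrow> nat \<Rightarrow> nat set" where
  "level N adj k m = {i. i < N \<and> hop_dist adj i k = m}"

text \<open>One step of the algorithm with source s, from state (dh, c, a) at time t-1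
  to state (dh', c', a') at time t (all nodes carry value v_i = 1).\<close>
definition alg_step :: "nat \<Rightarrow> (nat \<Rightarrow> nat \<Rightarrow> bool) \<Rightarrow> nat \<Rightarrow>
    (nat \<Rightarrow> nat) \<Rightarrow> (nat \<Rightarrow> nat) \<Rightarrow> (nat \<Rightarrow> nat) \<Rightarrow>
    (nat \<Rightarrow> nat) \<Rightarrow> (nat \<Rightarrow> nat) \<Rightarrow> (nat \<Rightarrow> nat) \<Rightarrow> bool" where
  "alg_step N adj s dh c a dh' c' a' \<longleftrightarrow>
     (\<forall>i<N.
        dh' i = (if i = s then 0 else Min {dh j + 1 | j. adj i j}) \<and>
        (if i = s then c' i = i else adj i (c' i) \<and> dh (c' i) + 1 = dh' i) \<and>
        a' i = (\<Sum>j\<in>{j. j < N \<and> c j = i \<and> dh j = dh' i + 1}. a j) + 1)"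

end

theory Submission
  imports Defs
begin

text \<open>
  Write \<open>d\<close> for the hop distance. The estimate \<open>dh t i\<close> rises by at most one per step
  towards the new distance, so \<open>min t (d i 0) \<le> dh t i\<close>; and since it starts from the distance
  to the old source, \<open>d i (D - 1) \<le> k + 1\<close> implies \<open>dh k i \<le> k + 1\<close>. A child \<open>j\<close> of \<open>i\<close>
  at time \<open>t\<close> satisfies \<open>dh (t - 1) j = dh t i + 1\<close>, while its choice of \<open>i\<close> as parent at time
  \<open>t - 1\<close> gives \<open>dh (t - 1) j = dh (t - 2) i + 1\<close>. So \<open>i\<close> can only have children if its estimate
  is the same at times \<open>t - 2\<close> and \<open>t\<close>. For \<open>i \<in> I\<^sub>1(t)\<close> the two bounds give
  \<open>dh (t - 2) i \<le> t - 1 < t \<le> dh t i\<close> (at \<open>t = 1\<close> the steady initial state plays the role of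
  time \<open>t - 2\<close>), so \<open>i\<close> has no children and \<open>a t i = v i = 1\<close>.
\<close>

lemma hop_dist_le_walk: "is_walk adj p n i j \<Longrightarrow> hop_dist adj i j \<le> n"
  unfolding hop_dist_def by (rule Least_le) blast

lemma shortest_walk_exists:
  "is_walk adj p n i j \<Longrightarrow> \<exists>q. is_walk adj q (hop_dist adj i j) i j"
  unfolding hop_dist_def by (rule LeastI_ex) blast

lemma hop_dist_self: "hop_dist adj i i = 0"
  using hop_dist_le_walk[of adj "\<lambda>_. i" 0 i i] by (simp add: is_walk_def)

lemma hop_dist_adj_le:
  assumes "adj i j" "is_walk adj p n j k"
  shows "hop_dist adj i k \<le> hop_dist adj j k + 1"
proof -
  obtain q where q: "is_walk adj q (hop_dist adj j k) j k"
    using shortest_walk_exists[OF assms(2)] by blast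
  have "is_walk adj (\<lambda>m. if m = 0 then i else q (m - 1)) (hop_dist adj j k + 1) i k"
    using q assms(1) unfolding is_walk_def by (auto simp: less_Suc_eq_0_disj)
  then show ?thesis by (rule hop_dist_le_walk)
qed

lemma hop_dist_next_vertex:
  assumes "is_walk adj p n i k" "i \<noteq> k"
  obtains j where "adj i j" "hop_dist adj j k + 1 \<le> hop_dist adj i k"
proof -
  obtain q where q: "is_walk adj q (hop_dist adj i k) i k"
    using shortest_walk_exists[OF assms(1)] by blast
  then obtain h where h: "hop_dist adj i k = Suc h"
    using assms(2) by (cases "hop_dist adj i k") (auto simp: is_walk_def)
  have "is_walk adj (\<lambda>m. q (Suc m)) h (q 1) k"
    using q unfolding h is_walk_def by auto
  then have "hop_dist adj (q 1) k \<le> h" by (rule hop_dist_le_walk)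
  moreover have "adj i (q 1)"
    using q unfolding h is_walk_def by auto
  ultimately show ?thesis using h that by simp
qed

lemma connected_walk:
  "connected_graph N adj \<Longrightarrow> i < N \<Longrightarrow> j < N \<Longrightarrow> \<exists>p n. is_walk adj p n i j"
  unfolding connected_graph_def by blast

lemma simple_graph_adj_less: "simple_graph N adj \<Longrightarrow> adj i j \<Longrightarrow> j < N"
  unfolding simple_graph_def by blast

lemma simple_graph_adj_sym: "simple_graph N adj \<Longrightarrow> adj i j \<Longrightarrow> adj j i"
  unfolding simple_graph_def by blast

lemma alg_step_source_dist:
  "alg_step N adj s dh c a dh' c' a' \<Longrightarrow> s < N \<Longrightarrow> dh' s = 0"
  unfolding alg_step_def by auto

lemma alg_step_parent:
  "alg_step N adj s dh c a dh' c' a' \<Longrightarrow> i < N \<Longrightarrow> i \<noteq> s \<Longrightarrow>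
    adj i (c' i) \<and> dh' i = dh (c' i) + 1"
  unfolding alg_step_def by auto

lemma alg_step_aggregate:
  "alg_step N adj s dh c a dh' c' a' \<Longrightarrow> i < N \<Longrightarrow>
    a' i = (\<Sum>j\<in>{j. j < N \<and> c j = i \<and> dh j = dh' i + 1}. a j) + 1"
  unfolding alg_step_def by blast

lemma alg_step_dist_le_neighbour:
  assumes step: "alg_step N adj s dh c a dh' c' a'" and graph: "simple_graph N adj"
    and "i < N" "adj i j"
  shows "dh' i \<le> dh j + 1"
proof (cases "i = s")
  case False
  have "{dh j + 1 | j. adj i j} \<subseteq> (\<lambda>j. dh j + 1) ` {..<N}"
    using simple_graph_adj_less[OF graph] by auto
  then have "finite {dh j + 1 | j. adj i j}" by (rule finite_subset) simp
  then have "Min {dh j + 1 | j. adj i j} \<le> dh j + 1"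
    using \<open>adj i j\<close> by (intro Min_le) blast+
  with step \<open>i < N\<close> False show ?thesis unfolding alg_step_def by auto
qed (use step \<open>i < N\<close> in \<open>simp add: alg_step_source_dist\<close>)

lemma alg_step_aggregate_eq_1_if_dist_grows:
  assumes step0: "alg_step N adj s\<^sub>0 dh\<^sub>0 c\<^sub>0 a\<^sub>0 dh c a"
    and step: "alg_step N adj s dh c a dh' c' a'"
    and "i < N" and grows: "dh\<^sub>0 i < dh' i"
  shows "a' i = 1"
proof -
  have "{j. j < N \<and> c j = i \<and> dh j = dh' i + 1} = {}"
  proof (intro equals0I)
    fix j assume j: "j \<in> {j. j < N \<and> c j = i \<and> dh j = dh' i + 1}"
    show False
    proof (cases "j = s\<^sub>0")
      case True
      then show False using j alg_step_source_dist[OF step0] by auto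
    next
      case False
      then show False using j grows alg_step_parent[OF step0, of j] by auto
    qed
  qed
  with alg_step_aggregate[OF step \<open>i < N\<close>] show ?thesis by (simp del: Collect_empty_eq)
qed

lemma alg_step_dist_lower:
  assumes step: "alg_step N adj s dh c a dh' c' a'"
    and graph: "simple_graph N adj" and conn: "connected_graph N adj" and "s < N"
    and lower: "\<forall>j<N. min n (hop_dist adj j s) \<le> dh j" and "i < N"
  shows "min (Suc n) (hop_dist adj i s) \<le> dh' i"
proof (cases "i = s")
  case False
  then have parent: "adj i (c' i)" "dh' i = dh (c' i) + 1"
    using alg_step_parent[OF step \<open>i < N\<close>] by auto
  have "c' i < N" using simple_graph_adj_less[OF graph parent(1)] .
  then have "hop_dist adj i s \<le> hop_dist adj (c' i) s + 1"
    using connected_walk[OF conn _ \<open>s < N\<close>] hop_dist_adj_le[of adj i "c' i"] parent(1) by blast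
  with lower \<open>c' i < N\<close> parent(2) show ?thesis by fastforce
qed (simp add: hop_dist_self)

lemma alg_step_dist_upper:
  assumes step: "alg_step N adj s dh c a dh' c' a'"
    and graph: "simple_graph N adj" and conn: "connected_graph N adj"
    and "s < N" "r < N" "1 \<le> n"
    and upper: "\<forall>j<N. hop_dist adj j r \<le> n \<longrightarrow> dh j \<le> n"
    and "i < N" "hop_dist adj i r \<le> Suc n"
  shows "dh' i \<le> Suc n"
proof (cases "i = s")
  case False
  obtain j where j: "adj i j" "hop_dist adj j r \<le> n"
  proof (cases "i = r")
    case True
    obtain j where "adj i j"
      using hop_dist_next_vertex connected_walk[OF conn \<open>i < N\<close> \<open>s < N\<close>] False by metis
    moreover have "hop_dist adj j r \<le> 1"
      using hop_dist_adj_le[of adj j i] hop_dist_self[of adj r] True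
        simple_graph_adj_sym[OF graph \<open>adj i j\<close>] connected_walk[OF conn \<open>i < N\<close> \<open>r < N\<close>]
      by fastforce
    ultimately show ?thesis using that \<open>1 \<le> n\<close> by simp
  next
    case False
    then show ?thesis
      using hop_dist_next_vertex connected_walk[OF conn \<open>i < N\<close> \<open>r < N\<close>] that
        \<open>hop_dist adj i r \<le> Suc n\<close> by (metis add_le_cancel_right le_trans Suc_eq_plus1)
  qed
  have "dh j \<le> n" using upper j simple_graph_adj_less[OF graph j(1)] by blast
  with alg_step_dist_le_neighbour[OF step graph \<open>i < N\<close> j(1)] show ?thesis by simp
qed (use step \<open>s < N\<close> in \<open>simp add: alg_step_source_dist\<close>)

lemma alg_run_dist_lower:
  assumes run: "\<forall>t. alg_step N adj s (dh t) (c t) (a t) (dh (Suc t)) (c (Suc t)) (a (Suc t))"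
    and graph: "simple_graph N adj" and conn: "connected_graph N adj" and "s < N"
  shows "i < N \<Longrightarrow> min t (hop_dist adj i s) \<le> dh t i"
proof (induction t arbitrary: i)
  case (Suc t)
  then show ?case using alg_step_dist_lower[OF run[rule_format] graph conn \<open>s < N\<close>] by blast
qed simp

lemma alg_run_dist_upper:
  assumes run: "\<forall>t. alg_step N adj s (dh t) (c t) (a t) (dh (Suc t)) (c (Suc t)) (a (Suc t))"
    and graph: "simple_graph N adj" and conn: "connected_graph N adj" and "s < N" "r < N"
    and init: "\<forall>j<N. dh 0 j \<le> hop_dist adj j r"
  shows "i < N \<Longrightarrow> hop_dist adj i r \<le> Suc k \<Longrightarrow> dh k i \<le> Suc k"
proof (induction k arbitrary: i)
  case 0
  then show ?case using init by fastforce
next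
  case (Suc k)
  show ?case
    by (rule alg_step_dist_upper[OF run[rule_format] graph conn \<open>s < N\<close> \<open>r < N\<close>])
      (use Suc in auto)
qed

theorem lemma3:
  fixes N D :: nat
    and adj :: "nat \<Rightarrow> nat \<Rightarrow> bool"
    and dh c a :: "nat \<Rightarrow> nat \<Rightarrow> nat"
  assumes graph: "simple_graph N adj"
    and conn: "connected_graph N adj"
    and D_gt: "D > 2"
    and D_le: "D \<le> N"
    and ecc: "Max {hop_dist adj i 0 | i. i < N} = D - 1"
    and path_adj: "\<forall>i. i + 1 < D \<longrightarrow> adj i (i + 1)"
    and path_dist: "\<forall>i<D. hop_dist adj 0 i = i"
    and steady: "alg_step N adj (D - 1) (dh 0) (c 0) (a 0) (dh 0) (c 0) (a 0)"
    and init_dist: "\<forall>m. \<forall>i\<in>level N adj (D - 1) m. dh 0 i = m"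
    and init_sum: "\<forall>m. (\<Sum>i\<in>level N adj (D - 1) m. a 0 i) \<le> N"
    and step: "\<forall>t. alg_step N adj 0 (dh t) (c t) (a t) (dh (Suc t)) (c (Suc t)) (a (Suc t))"
  shows "\<forall>t\<ge>1. \<forall>i.
           i \<in> (\<Union>m<t. level N adj (D - 1) m) - (\<Union>m<t. level N adj 0 m) \<longrightarrow> a t i = 1"
proof (intro allI impI)
  fix t i
  assume "1 \<le> t" and "i \<in> (\<Union>m<t. level N adj (D - 1) m) - (\<Union>m<t. level N adj 0 m)"
  then have "i < N" and near_old: "hop_dist adj i (D - 1) < t" and far_new: "t \<le> hop_dist adj i 0"
    unfolding level_def by auto
  obtain s where t: "t = Suc s" using \<open>1 \<le> t\<close> by (cases t) auto
  have "0 < N" "D - 1 < N" using D_gt D_le by auto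
  have dh_init: "\<forall>j<N. dh 0 j = hop_dist adj j (D - 1)"
    using init_dist unfolding level_def by blast
  have "t \<le> dh t i"
    using alg_run_dist_lower[OF step graph conn \<open>0 < N\<close> \<open>i < N\<close>, of t] far_new by simp
  moreover obtain s\<^sub>0 dh\<^sub>0 c\<^sub>0 a\<^sub>0 where
    "alg_step N adj s\<^sub>0 dh\<^sub>0 c\<^sub>0 a\<^sub>0 (dh s) (c s) (a s)" "dh\<^sub>0 i < t"
  proof (cases s)
    case 0
    then show ?thesis
      using that[of "D - 1" "dh 0" "c 0" "a 0"] steady dh_init \<open>i < N\<close> near_old t by simp
  next
    case (Suc k)
    have "dh k i \<le> Suc k"
      using alg_run_dist_upper[OF step graph conn \<open>0 < N\<close> \<open>D - 1 < N\<close>] dh_init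
        \<open>i < N\<close> near_old t Suc by simp
    then show ?thesis using that[of 0 "dh k" "c k" "a k"] step t Suc by simp
  qed
  ultimately show "a t i = 1"
    using alg_step_aggregate_eq_1_if_dist_grows step[rule_format, of s] \<open>i < N\<close> t by fastforce
qed

end
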